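(* Let $I$ be an ideal on a cardinal $\kappa$ and $\theta<\kappa$ a regular cardinal. The following are equivalent: (1) $I$ is weakly $\theta$-saturated and $\theta$-indecomposable. (2) Whenever $\langle S_\alpha:\alpha<\kappa\rangle$ is a sequence of sets of ordinals with $|S_\alpha|<\theta$ for all $\alpha$, every $\leq$-increasing sequence $\langle h_i:i<\theta\rangle$ of functions in $\prod_{\alpha<\kappa}S_\alpha$ (i.e. $i<j$ implies $h_i(\alpha)\leq h_j(\alpha)$ for all $\alpha$) is eventually constant modulo $I$: there is $i^*<\theta$ with $\{\alpha: h_i(\alpha)\neq h_{i^*}(\alpha)\}\in I$ for all $i\geq i^*$.
   Context: By an ideal on a cardinal $\kappa$ we mean a proper ideal on $\kappa$ containing all bounded subsets of $\kappa$. $I$ is weakly $\theta$-saturated if there is no partition of $\kappa$ into $\theta$ pairwise disjoint sets not in $I$. $I$ is $\theta$-indecomposable if whenever $\langle A_i:i<\theta\rangle$ are subsets of $\kappa$ with $\bigcup_{i<\theta}A_i\notin I$, there is $w\subseteq\theta$ with $|w|<\theta$ and $\bigcup_{i\in w}A_i\notin I$. *)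

theory Defs
  imports Main
begin

unbundle cardinal_syntax

text \<open>A cardinal kappa is represented by a cardinal-order relation k (Card_order k);
  its elements (the ordinals below kappa) are the elements of Field k, ordered by k.\<close>

definition bounded_in :: "'a rel \<Rightarrow> 'a set \<Rightarrow> bool" where
  "bounded_in k A \<longleftrightarrow> (\<exists>\<beta>\<in>Field k. A \<subseteq> underS k \<beta>)"

definition ideal_on :: "'a rel \<Rightarrow> 'a set set \<Rightarrow> bool" where
  "ideal_on k I \<longleftrightarrow>
     I \<subseteq> Pow (Field k) \<and>
     {} \<in> I \<and>
     (\<forall>A\<in>I. \<forall>B. B \<subseteq> A \<longrightarrow> B \<in> I) \<and>
     (\<forall>A\<in>I. \<forall>B\<in>I. A \<union> B \<in> I) \<and>
     Field k \<notin> I \<and>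
     (\<forall>A. A \<subseteq> Field k \<and> bounded_in k A \<longrightarrow> A \<in> I)"

definition weakly_saturated :: "'a rel \<Rightarrow> 'b rel \<Rightarrow> 'a set set \<Rightarrow> bool" where
  "weakly_saturated k t I \<longleftrightarrow>
     \<not> (\<exists>A :: 'b \<Rightarrow> 'a set.
          (\<forall>i\<in>Field t. A i \<subseteq> Field k \<and> A i \<notin> I) \<and>
          (\<forall>i\<in>Field t. \<forall>j\<in>Field t. i \<noteq> j \<longrightarrow> A i \<inter> A j = {}) \<and>
          (\<Union>i\<in>Field t. A i) = Field k)"

definition indecomposable :: "'a rel \<Rightarrow> 'b rel \<Rightarrow> 'a set set \<Rightarrow> bool" where
  "indecomposable k t I \<longleftrightarrow>
     (\<forall>A :: 'b \<Rightarrow> 'a set.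
        (\<forall>i\<in>Field t. A i \<subseteq> Field k) \<and> (\<Union>i\<in>Field t. A i) \<notin> I \<longrightarrow>
        (\<exists>w \<subseteq> Field t. |w| <o t \<and> (\<Union>i\<in>w. A i) \<notin> I))"

end

theory Submission
  imports Defs
begin

text \<open>Both conditions are equivalent to: every map \<open>g : \<kappa> \<rightarrow> \<theta>\<close> is bounded modulo \<open>I\<close>,
  i.e. \<open>{\<alpha>. i < g \<alpha>} \<in> I\<close> for some \<open>i < \<theta>\<close>.
  Given boundedness, an increasing sequence \<open>\<langle>h\<^sub>i : i < \<theta>\<rangle>\<close> through sets of size \<open>< \<theta>\<close>
  stabilises at each \<open>\<alpha>\<close> from some \<open>g \<alpha> < \<theta>\<close> on (by regularity), and a bound for \<open>g\<close> is
  a point of eventual constancy. Conversely, eventual constancy of the truncations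
  \<open>h\<^sub>i(\<alpha>) = min(i, g \<alpha>)\<close> bounds \<open>g\<close>. Boundedness gives weak saturation (read a partition
  as a map into \<open>\<theta>\<close>) and indecomposability (the pieces with index up to the bound form a
  union of fewer than \<open>\<theta>\<close> sets). Finally, if some \<open>g\<close> is unbounded, indecomposability yields
  for each \<open>x < \<theta>\<close> some \<open>f(x)\<close> with \<open>{\<alpha>. x < g \<alpha> \<le> f(x)}\<close> positive; by regularity
  there are \<open>\<theta>\<close> many \<open>x\<close> any two of which are separated by \<open>f\<close>, and their intervals give
  \<open>\<theta>\<close> disjoint positive sets, contradicting weak saturation.\<close>

lemma regularCard_small_subset_underS:
  assumes t: "Cinfinite t" "regularCard t" and K: "K \<subseteq> Field t" "|K| <o t"
  obtains a where "a \<in> Field t" "K \<subseteq> underS t a"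
proof -
  have wo: "wo_rel t" using t Card_order_wo_rel by blast
  have "relChain t (underS t)"
    unfolding relChain_def using underS_incr[OF wo_rel.TRANS[OF wo] wo_rel.ANTISYM[OF wo]] by blast
  moreover have "K \<subseteq> (\<Union>a\<in>Field t. underS t a)"
  proof
    fix b assume "b \<in> K"
    then obtain a where "a \<in> Field t" "b \<noteq> a" "(b, a) \<in> t"
      using K(1) Cinfinite_limit[OF _ t(1)] by blast
    then show "b \<in> (\<Union>a\<in>Field t. underS t a)" unfolding underS_def by blast
  qed
  ultimately obtain a where "a \<in> Field t" "K \<subseteq> underS t a"
    using regularCard_UNION[of t "underS t" K] t K(2) by blast
  then show ?thesis using that by blast
qed

lemma card_of_under_ordLess:
  assumes t: "Cinfinite t" and a: "a \<in> Field t"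
  shows "|under t a| <o t"
proof -
  obtain b where b: "b \<in> Field t" "a \<noteq> b" "(a, b) \<in> t" using Cinfinite_limit[OF a t] by blast
  have "under t a \<subseteq> underS t b"
  proof
    fix c assume "c \<in> under t a"
    then have "(c, a) \<in> t" by (simp add: under_def)
    then show "c \<in> underS t b"
      using b Card_order_trans[of t c a b] t by (cases "c = a") (auto simp: underS_def)
  qed
  then have "|under t a| \<le>o |underS t b|" by (rule card_of_mono1)
  then show ?thesis using card_of_underS[OF _ b(1)] t ordLeq_ordLess_trans by blast
qed

lemma eventually_constant_if_small_range:
  fixes f :: "'b \<Rightarrow> 'o :: order"
  assumes t: "Cinfinite t" "regularCard t"
    and mono: "\<And>i j. (i, j) \<in> t \<Longrightarrow> f i \<le> f j"
    and small: "|f ` Field t| <o t"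
  obtains b where "b \<in> Field t" "\<And>i. (b, i) \<in> t \<Longrightarrow> f i = f b"
proof -
  let ?K = "inv_into (Field t) f ` f ` Field t"
  have "?K \<subseteq> Field t" by (auto intro: inv_into_into)
  moreover have "|?K| <o t" using card_of_image small ordLeq_ordLess_trans by blast
  ultimately obtain b where b: "b \<in> Field t" "?K \<subseteq> underS t b"
    using regularCard_small_subset_underS[OF t] by blast
  show ?thesis
  proof (rule that[OF b(1)])
    fix i assume i: "(b, i) \<in> t"
    then have "f i \<in> f ` Field t" by (blast intro: FieldI2)
    then have "(inv_into (Field t) f (f i), b) \<in> t" "f (inv_into (Field t) f (f i)) = f i"
      using b(2) by (auto simp: underS_def f_inv_into_f)
    then show "f i = f b" using mono[OF i] mono by (metis order_antisym)
  qed
qed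

lemma Well_order_le: "Well_order {(x :: 'o :: wellorder, y). x \<le> y}"
proof -
  let ?R = "{(x :: 'o, y). x \<le> y}"
  have "?R - Id = {(x, y). x < y}" by auto
  then have "wf (?R - Id)" using wf by simp
  moreover have "Linear_order ?R"
    by (auto simp: linear_order_on_def partial_order_on_def preorder_on_def refl_on_def
        trans_def antisym_def total_on_def Field_def)
  ultimately show ?thesis by (simp add: well_order_on_def)
qed

lemma monotone_embedding_into_wellorder:
  fixes t :: "'b rel"
  assumes "t \<le>o |UNIV :: 'o :: wellorder set|"
  obtains e :: "'b \<Rightarrow> 'o :: wellorder" where "inj_on e (Field t)" "\<And>i j. (i, j) \<in> t \<Longrightarrow> e i \<le> e j"
proof -
  let ?R = "{(x :: 'o, y). x \<le> y}"
  have "Field ?R = UNIV" by (auto simp: Field_def)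
  then have "|UNIV :: 'o set| \<le>o ?R" using card_of_least[OF Well_order_le] by metis
  then have "t \<le>o ?R" using assms ordLeq_transitive by blast
  then obtain e where e: "embed t ?R e" and wt: "Well_order t" unfolding ordLeq_def by blast
  show ?thesis
  proof
    show "inj_on e (Field t)" using embed_inj_on[OF wt e] .
    show "e i \<le> e j" if "(i, j) \<in> t" for i j using embed_compat[OF e] that by (auto simp: compat_def)
  qed
qed

definition min_wrt :: "'b rel \<Rightarrow> 'b \<Rightarrow> 'b \<Rightarrow> 'b" where
  "min_wrt r i j = (if (i, j) \<in> r then i else j)"

lemma min_wrt_in_under:
  assumes "Card_order t" "j \<in> Field t"
  shows "min_wrt t i j \<in> under t j"
  using assms wo_rel.REFL[OF Card_order_wo_rel]
  by (auto simp: min_wrt_def under_def refl_on_def)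

lemma min_wrt_mono:
  assumes t: "Card_order t" and i: "(i, i') \<in> t" and j: "j \<in> Field t"
  shows "(min_wrt t i j, min_wrt t i' j) \<in> t"
proof -
  have wo: "wo_rel t" using t by (rule Card_order_wo_rel)
  have "(j, j) \<in> t" using j wo_rel.REFL[OF wo] by (auto simp: refl_on_def)
  moreover have "(i, j) \<in> t" if "(i', j) \<in> t" using i that wo_rel.TRANS[OF wo] by (auto dest: transD)
  ultimately show ?thesis using i by (auto simp: min_wrt_def)
qed

lemma card_of_image_min_wrt:
  assumes t: "Cinfinite t" and j: "j \<in> Field t"
  shows "|(\<lambda>i. e (min_wrt t i j)) ` Field t| <o t"
proof -
  have "(\<lambda>i. e (min_wrt t i j)) ` Field t \<subseteq> e ` under t j"
    using min_wrt_in_under[of t j] t j by auto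
  then have "|(\<lambda>i. e (min_wrt t i j)) ` Field t| \<le>o |e ` under t j|" by (rule card_of_mono1)
  also have "|e ` under t j| \<le>o |under t j|" by (rule card_of_image)
  finally have "|(\<lambda>i. e (min_wrt t i j)) ` Field t| \<le>o |under t j|" .
  then show ?thesis using card_of_under_ordLess[OF t j] by (rule ordLeq_ordLess_trans)
qed

definition separated_by :: "'b rel \<Rightarrow> ('b \<Rightarrow> 'b) \<Rightarrow> 'b set \<Rightarrow> bool" where
  "separated_by t f M \<longleftrightarrow> M \<subseteq> Field t \<and> (\<forall>x\<in>M. \<forall>y\<in>M. y \<in> aboveS t x \<longrightarrow> (f x, y) \<in> t)"

lemma separated_by_Union_chain:
  assumes "C \<in> chains {M. separated_by t f M}"
  shows "separated_by t f (\<Union>C)"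
  unfolding separated_by_def
proof (intro conjI ballI impI)
  have C: "C \<subseteq> {M. separated_by t f M}" and ch: "\<forall>X\<in>C. \<forall>Y\<in>C. X \<subseteq> Y \<or> Y \<subseteq> X"
    using assms unfolding chains_def chain_subset_def by blast+
  then show "\<Union>C \<subseteq> Field t" unfolding separated_by_def by blast
  fix x y assume "x \<in> \<Union>C" "y \<in> \<Union>C" "y \<in> aboveS t x"
  moreover from \<open>x \<in> \<Union>C\<close> \<open>y \<in> \<Union>C\<close> obtain M where "M \<in> C" "x \<in> M" "y \<in> M"
    using ch by blast
  ultimately show "(f x, y) \<in> t" using C unfolding separated_by_def by blast
qed

lemma separated_by_insert:
  assumes t: "Card_order t" and M: "separated_by t f M" and y: "y \<in> Field t"
    and below: "M \<union> f ` M \<subseteq> underS t y"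
  shows "separated_by t f (insert y M)"
  unfolding separated_by_def
proof (intro conjI ballI impI)
  show "insert y M \<subseteq> Field t" using M y unfolding separated_by_def by blast
  fix a b assume a: "a \<in> insert y M" and b: "b \<in> insert y M" and ab: "b \<in> aboveS t a"
  show "(f a, b) \<in> t"
  proof (cases "a = y")
    case True
    then have "b \<in> M" using ab b by (auto simp: aboveS_def)
    then have "(b, a) \<in> t" using below True by (auto simp: underS_def)
    then show ?thesis using ab wo_rel.ANTISYM[OF Card_order_wo_rel[OF t]]
      by (auto simp: aboveS_def dest: antisymD)
  next
    case False
    then have "a \<in> M" using a by blast
    then show ?thesis
      using M b ab below unfolding separated_by_def by (cases "b = y") (auto simp: underS_def)
  qed
qed

lemma regularCard_large_separated:
  assumes t: "Cinfinite t" "regularCard t" and f: "f ` Field t \<subseteq> Field t"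
  obtains M where "separated_by t f M" "|Field t| =o |M|"
proof -
  have "\<forall>C\<in>chains {M. separated_by t f M}. \<Union>C \<in> {M. separated_by t f M}"
    using separated_by_Union_chain by blast
  then obtain M where M: "separated_by t f M"
    and max: "\<And>N. separated_by t f N \<Longrightarrow> M \<subseteq> N \<Longrightarrow> N = M"
    using Zorn_Lemma[of "{M. separated_by t f M}"] by auto
  have MF: "M \<subseteq> Field t" using M unfolding separated_by_def by blast
  have "\<not> |M| <o t"
  proof
    assume "|M| <o t"
    moreover have "|f ` M| <o t" using card_of_image \<open>|M| <o t\<close> ordLeq_ordLess_trans by blast
    ultimately have "|M \<union> f ` M| <o t"
      using card_of_Un_ordLess_infinite_Field t(1) unfolding cinfinite_def by blast
    moreover have "M \<union> f ` M \<subseteq> Field t" using MF f by blast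
    ultimately obtain y where y: "y \<in> Field t" "M \<union> f ` M \<subseteq> underS t y"
      using regularCard_small_subset_underS[OF t] by blast
    then have "insert y M = M" using max separated_by_insert[OF _ M] t(1) by blast
    then show False using y(2) underS_notIn by fast
  qed
  moreover have "|M| \<le>o |Field t|" using MF by (rule card_of_mono1)
  moreover have "|Field t| =o t" using card_of_Field_ordIso t(1) by blast
  ultimately have "|Field t| =o |M|"
    using ordLeq_iff_ordLess_or_ordIso ordIso_symmetric ordLess_ordIso_trans by metis
  with M show ?thesis using that by blast
qed

lemma separated_by_intervals_disjoint:
  assumes t: "Card_order t" and M: "separated_by t f M" and xy: "x \<in> M" "y \<in> M" "x \<noteq> y"
  shows "(aboveS t x \<inter> under t (f x)) \<inter> (aboveS t y \<inter> under t (f y)) = {}"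
proof -
  have wo: "wo_rel t" using t by (rule Card_order_wo_rel)
  have disjoint: "aboveS t x \<inter> under t (f x) \<inter> aboveS t y = {}"
    if "x \<in> M" "y \<in> M" "y \<in> aboveS t x" for x y
  proof -
    have "(f x, y) \<in> t" using M that unfolding separated_by_def by blast
    then have "under t (f x) \<subseteq> under t y" using under_incr[OF wo_rel.TRANS[OF wo]] by blast
    moreover have "under t y \<inter> aboveS t y = {}"
      using wo_rel.ANTISYM[OF wo] by (auto simp: under_def aboveS_def dest: antisymD)
    ultimately show ?thesis by blast
  qed
  have "x \<in> Field t" "y \<in> Field t" using M xy unfolding separated_by_def by blast+
  then have "y \<in> aboveS t x \<or> x \<in> aboveS t y"
    using wo_rel.TOTALS[OF wo] xy(3) by (auto simp: aboveS_def)
  then show ?thesis using disjoint xy by blast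
qed

lemma ideal_on_subset: "ideal_on k I \<Longrightarrow> A \<in> I \<Longrightarrow> B \<subseteq> A \<Longrightarrow> B \<in> I"
  unfolding ideal_on_def by blast

lemma ideal_on_Un: "ideal_on k I \<Longrightarrow> A \<in> I \<Longrightarrow> B \<in> I \<Longrightarrow> A \<union> B \<in> I"
  unfolding ideal_on_def by blast

lemma indecomposableD:
  assumes "indecomposable k t I" "\<forall>i\<in>Field t. A i \<subseteq> Field k" "(\<Union>i\<in>Field t. A i) \<notin> I"
  obtains w where "w \<subseteq> Field t" "|w| <o t" "(\<Union>i\<in>w. A i) \<notin> I"
  using assms(1)[unfolded indecomposable_def, rule_format, of A] assms(2,3) by blast

lemma not_weakly_saturatedI:
  assumes I: "ideal_on k I" and nonempty: "Field t \<noteq> {}"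
    and pos: "\<And>i. i \<in> Field t \<Longrightarrow> A i \<subseteq> Field k \<and> A i \<notin> I"
    and disj: "\<And>i j. i \<in> Field t \<Longrightarrow> j \<in> Field t \<Longrightarrow> i \<noteq> j \<Longrightarrow> A i \<inter> A j = {}"
  shows "\<not> weakly_saturated k t I"
proof -
  obtain z where z: "z \<in> Field t" using nonempty by blast
  define R where "R = Field k - (\<Union>j\<in>Field t. A j)"
  define A' where "A' i = (if i = z then A i \<union> R else A i)" for i
  have "A' i \<subseteq> Field k \<and> A' i \<notin> I" if "i \<in> Field t" for i
  proof
    show "A' i \<subseteq> Field k" using pos[OF that] unfolding A'_def R_def by auto
    have "A i \<subseteq> A' i" unfolding A'_def by simp
    then show "A' i \<notin> I" using pos[OF that] ideal_on_subset[OF I] by blast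
  qed
  moreover have "A' i \<inter> A' j = {}" if "i \<in> Field t" "j \<in> Field t" "i \<noteq> j" for i j
  proof -
    have "A i \<inter> R = {}" "A j \<inter> R = {}" using that unfolding R_def by blast+
    then show ?thesis using disj[OF that] that unfolding A'_def by auto
  qed
  moreover have "(\<Union>i\<in>Field t. A' i) = Field k"
  proof
    show "(\<Union>i\<in>Field t. A' i) \<subseteq> Field k" using calculation(1) by blast
    have "Field k \<subseteq> (\<Union>i\<in>Field t. A i) \<union> A' z" unfolding A'_def R_def by auto
    also have "\<dots> \<subseteq> (\<Union>i\<in>Field t. A' i)" using z unfolding A'_def by auto
    finally show "Field k \<subseteq> (\<Union>i\<in>Field t. A' i)" .
  qed
  ultimately show ?thesis unfolding weakly_saturated_def by blast
qed

lemma indecomposable_bounded_piece: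
  assumes I: "ideal_on k I" and ind: "indecomposable k t I" and t: "Cinfinite t" "regularCard t"
    and X: "X \<subseteq> Field k" "X \<notin> I" and g: "g ` X \<subseteq> Field t"
  obtains b where "b \<in> Field t" "{\<alpha>\<in>X. g \<alpha> \<in> under t b} \<notin> I"
proof -
  define A where "A j = {\<alpha>\<in>X. g \<alpha> = j}" for j
  have "\<forall>j\<in>Field t. A j \<subseteq> Field k" using X unfolding A_def by blast
  moreover have "(\<Union>j\<in>Field t. A j) = X" using g unfolding A_def by auto
  ultimately obtain w where w: "w \<subseteq> Field t" "|w| <o t" "(\<Union>j\<in>w. A j) \<notin> I"
    using indecomposableD[OF ind] X(2) by metis
  obtain b where b: "b \<in> Field t" "w \<subseteq> underS t b"
    using regularCard_small_subset_underS[OF t w(1,2)] by blast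
  have "(\<Union>j\<in>w. A j) \<subseteq> {\<alpha>\<in>X. g \<alpha> \<in> under t b}"
    using b(2) unfolding A_def underS_def under_def by auto
  then have "{\<alpha>\<in>X. g \<alpha> \<in> under t b} \<notin> I" using w(3) ideal_on_subset[OF I] by blast
  with b(1) show ?thesis by (rule that)
qed

definition maps_bounded_mod :: "'a rel \<Rightarrow> 'b rel \<Rightarrow> 'a set set \<Rightarrow> bool" where
  "maps_bounded_mod k t I \<longleftrightarrow>
     (\<forall>g. g ` Field k \<subseteq> Field t \<longrightarrow> (\<exists>i\<in>Field t. {\<alpha>\<in>Field k. g \<alpha> \<in> aboveS t i} \<in> I))"

lemma maps_bounded_modD:
  assumes "maps_bounded_mod k t I" "g ` Field k \<subseteq> Field t"
  obtains i where "i \<in> Field t" "{\<alpha>\<in>Field k. g \<alpha> \<in> aboveS t i} \<in> I"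
  using assms unfolding maps_bounded_mod_def by blast

lemma weakly_saturated_if_maps_bounded_mod:
  assumes I: "ideal_on k I" and t: "Cinfinite t" and bd: "maps_bounded_mod k t I"
  shows "weakly_saturated k t I"
  unfolding weakly_saturated_def
proof
  assume "\<exists>A :: 'b \<Rightarrow> 'a set. (\<forall>i\<in>Field t. A i \<subseteq> Field k \<and> A i \<notin> I) \<and>
      (\<forall>i\<in>Field t. \<forall>j\<in>Field t. i \<noteq> j \<longrightarrow> A i \<inter> A j = {}) \<and> (\<Union>i\<in>Field t. A i) = Field k"
  then obtain A :: "'b \<Rightarrow> 'a set" where pos: "\<forall>i\<in>Field t. A i \<subseteq> Field k \<and> A i \<notin> I"
    and disj: "\<forall>i\<in>Field t. \<forall>j\<in>Field t. i \<noteq> j \<longrightarrow> A i \<inter> A j = {}"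
    and cover: "(\<Union>i\<in>Field t. A i) = Field k" by blast
  obtain g where g: "\<And>\<alpha>. \<alpha> \<in> Field k \<Longrightarrow> g \<alpha> \<in> Field t \<and> \<alpha> \<in> A (g \<alpha>)"
    using cover by (metis UN_E)
  obtain i where i: "i \<in> Field t" "{\<alpha>\<in>Field k. g \<alpha> \<in> aboveS t i} \<in> I"
    using maps_bounded_modD[OF bd] g by blast
  obtain j where j: "j \<in> Field t" "j \<in> aboveS t i"
    using Cinfinite_limit[OF i(1) t] by (auto simp: aboveS_def)
  have "A j \<subseteq> {\<alpha>\<in>Field k. g \<alpha> \<in> aboveS t i}"
  proof
    fix \<alpha> assume \<alpha>: "\<alpha> \<in> A j"
    then have "\<alpha> \<in> Field k" using pos j(1) by blast
    moreover have "g \<alpha> = j" using g[OF \<open>\<alpha> \<in> Field k\<close>] disj j(1) \<alpha> by blast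
    ultimately show "\<alpha> \<in> {\<alpha>\<in>Field k. g \<alpha> \<in> aboveS t i}" using j(2) by simp
  qed
  then show False using ideal_on_subset[OF I i(2)] pos j(1) by blast
qed

lemma indecomposable_if_maps_bounded_mod:
  assumes I: "ideal_on k I" and t: "Cinfinite t" and bd: "maps_bounded_mod k t I"
  shows "indecomposable k t I"
  unfolding indecomposable_def
proof (intro allI impI)
  fix A :: "'b \<Rightarrow> 'a set"
  assume "(\<forall>i\<in>Field t. A i \<subseteq> Field k) \<and> (\<Union>i\<in>Field t. A i) \<notin> I"
  then have sub: "\<forall>i\<in>Field t. A i \<subseteq> Field k" and pos: "(\<Union>i\<in>Field t. A i) \<notin> I" by auto
  show "\<exists>w\<subseteq>Field t. |w| <o t \<and> (\<Union>i\<in>w. A i) \<notin> I"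
  proof (rule ccontr)
    assume small_null: "\<not> ?thesis"
    obtain z where z: "z \<in> Field t" using t unfolding cinfinite_def by fastforce
    obtain g where g: "\<And>\<alpha>. \<alpha> \<in> (\<Union>i\<in>Field t. A i) \<Longrightarrow> g \<alpha> \<in> Field t \<and> \<alpha> \<in> A (g \<alpha>)"
      by (metis UN_E)
    define g' where "g' \<alpha> = (if \<alpha> \<in> (\<Union>i\<in>Field t. A i) then g \<alpha> else z)" for \<alpha>
    have "g' ` Field k \<subseteq> Field t" using g z by (auto simp: g'_def)
    then obtain i where i: "i \<in> Field t" "{\<alpha>\<in>Field k. g' \<alpha> \<in> aboveS t i} \<in> I"
      using maps_bounded_modD[OF bd] by blast
    have "(\<Union>j\<in>under t i. A j) \<in> I"
      using small_null card_of_under_ordLess[OF t i(1)] under_Field[of t i] by blast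
    moreover have "(\<Union>i\<in>Field t. A i) \<subseteq> (\<Union>j\<in>under t i. A j) \<union> {\<alpha>\<in>Field k. g' \<alpha> \<in> aboveS t i}"
    proof
      fix \<alpha> assume \<alpha>: "\<alpha> \<in> (\<Union>i\<in>Field t. A i)"
      then have "g' \<alpha> \<in> Field t" "\<alpha> \<in> A (g' \<alpha>)" "\<alpha> \<in> Field k" using g sub by (auto simp: g'_def)
      moreover have "g' \<alpha> \<in> under t i \<or> g' \<alpha> \<in> aboveS t i"
        using wo_rel.TOTALS[OF Card_order_wo_rel] t i(1) \<open>g' \<alpha> \<in> Field t\<close>
        by (auto simp: under_def aboveS_def)
      ultimately show "\<alpha> \<in> (\<Union>j\<in>under t i. A j) \<union> {\<alpha>\<in>Field k. g' \<alpha> \<in> aboveS t i}" by blast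
    qed
    ultimately show False using pos ideal_on_Un[OF I] ideal_on_subset[OF I] i(2) by blast
  qed
qed

lemma maps_bounded_mod_if_weakly_saturated_indecomposable:
  assumes I: "ideal_on k I" and t: "Cinfinite t" "regularCard t"
    and ws: "weakly_saturated k t I" and ind: "indecomposable k t I"
  shows "maps_bounded_mod k t I"
  unfolding maps_bounded_mod_def
proof (intro allI impI)
  fix g assume g: "g ` Field k \<subseteq> Field t"
  let ?above = "\<lambda>x. {\<alpha>\<in>Field k. g \<alpha> \<in> aboveS t x}"
  show "\<exists>i\<in>Field t. ?above i \<in> I"
  proof (rule ccontr)
    assume unbounded: "\<not> ?thesis"
    have bounded_pieces: "\<forall>x\<in>Field t. \<exists>b. b \<in> Field t \<and> {\<alpha>\<in>?above x. g \<alpha> \<in> under t b} \<notin> I"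
    proof
      fix x assume x: "x \<in> Field t"
      have "?above x \<subseteq> Field k" "?above x \<notin> I" "g ` ?above x \<subseteq> Field t"
        using unbounded x g by auto
      then obtain b where "b \<in> Field t" "{\<alpha>\<in>?above x. g \<alpha> \<in> under t b} \<notin> I"
        by (rule indecomposable_bounded_piece[OF I ind t])
      then show "\<exists>b. b \<in> Field t \<and> {\<alpha>\<in>?above x. g \<alpha> \<in> under t b} \<notin> I" by blast
    qed
    obtain f where "\<forall>x\<in>Field t. f x \<in> Field t \<and> {\<alpha>\<in>?above x. g \<alpha> \<in> under t (f x)} \<notin> I"
      using bchoice[OF bounded_pieces] by (rule exE)
    then have f: "f ` Field t \<subseteq> Field t"
      and piece: "\<And>x. x \<in> Field t \<Longrightarrow> {\<alpha>\<in>?above x. g \<alpha> \<in> under t (f x)} \<notin> I"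
      by auto
    obtain M where M: "separated_by t f M" and card: "|Field t| =o |M|"
      using regularCard_large_separated[OF t f] by blast
    obtain \<phi> where \<phi>: "bij_betw \<phi> (Field t) M" using card card_of_ordIso by blast
    define A where "A i = {\<alpha>\<in>?above (\<phi> i). g \<alpha> \<in> under t (f (\<phi> i))}" for i
    have "\<not> weakly_saturated k t I"
    proof (rule not_weakly_saturatedI[OF I, where A = A])
      show "Field t \<noteq> {}" using t(1) unfolding cinfinite_def by auto
      show "A i \<subseteq> Field k \<and> A i \<notin> I" if "i \<in> Field t" for i
        using piece \<phi> M that unfolding A_def separated_by_def bij_betw_def by blast
      show "A i \<inter> A j = {}" if "i \<in> Field t" "j \<in> Field t" "i \<noteq> j" for i j
      proof -
        have "\<phi> i \<in> M" "\<phi> j \<in> M" "\<phi> i \<noteq> \<phi> j"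
          using \<phi> that unfolding bij_betw_def inj_on_def by blast+
        with t(1) have "(aboveS t (\<phi> i) \<inter> under t (f (\<phi> i))) \<inter>
            (aboveS t (\<phi> j) \<inter> under t (f (\<phi> j))) = {}"
          using separated_by_intervals_disjoint[OF _ M] by blast
        then show ?thesis unfolding A_def by blast
      qed
    qed
    then show False using ws by blast
  qed
qed

lemma eventually_constant_if_maps_bounded_mod:
  fixes h :: "'b \<Rightarrow> 'a \<Rightarrow> 'o :: order"
  assumes I: "ideal_on k I" and t: "Cinfinite t" "regularCard t" and bd: "maps_bounded_mod k t I"
    and small: "\<forall>\<alpha>\<in>Field k. |S \<alpha>| <o t"
    and range: "\<forall>i\<in>Field t. \<forall>\<alpha>\<in>Field k. h i \<alpha> \<in> S \<alpha>"
    and increasing: "\<forall>i\<in>Field t. \<forall>j\<in>Field t. (i, j) \<in> t \<and> i \<noteq> j \<longrightarrow>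
       (\<forall>\<alpha>\<in>Field k. h i \<alpha> \<le> h j \<alpha>)"
  shows "\<exists>i0\<in>Field t. \<forall>i\<in>Field t. (i0, i) \<in> t \<longrightarrow> {\<alpha>\<in>Field k. h i \<alpha> \<noteq> h i0 \<alpha>} \<in> I"
proof -
  have mono: "h i \<alpha> \<le> h j \<alpha>" if "(i, j) \<in> t" "\<alpha> \<in> Field k" for i j \<alpha>
    using increasing that FieldI1[of i j t] FieldI2[of i j t] by (cases "i = j") auto
  have stabilizes: "\<forall>\<alpha>\<in>Field k. \<exists>b. b \<in> Field t \<and> (\<forall>i. (b, i) \<in> t \<longrightarrow> h i \<alpha> = h b \<alpha>)"
  proof
    fix \<alpha> assume \<alpha>: "\<alpha> \<in> Field k"
    have "(\<lambda>i. h i \<alpha>) ` Field t \<subseteq> S \<alpha>" using range \<alpha> by blast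
    then have "|(\<lambda>i. h i \<alpha>) ` Field t| \<le>o |S \<alpha>|" by (rule card_of_mono1)
    then have "|(\<lambda>i. h i \<alpha>) ` Field t| <o t" using small \<alpha> ordLeq_ordLess_trans by blast
    then obtain b where "b \<in> Field t" "\<And>i. (b, i) \<in> t \<Longrightarrow> h i \<alpha> = h b \<alpha>"
      using eventually_constant_if_small_range[OF t, of "\<lambda>i. h i \<alpha>"] mono[OF _ \<alpha>] by blast
    then show "\<exists>b. b \<in> Field t \<and> (\<forall>i. (b, i) \<in> t \<longrightarrow> h i \<alpha> = h b \<alpha>)" by blast
  qed
  obtain g where g: "\<forall>\<alpha>\<in>Field k. g \<alpha> \<in> Field t \<and> (\<forall>i. (g \<alpha>, i) \<in> t \<longrightarrow> h i \<alpha> = h (g \<alpha>) \<alpha>)"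
    using bchoice[OF stabilizes] by (rule exE)
  obtain i0 where i0: "i0 \<in> Field t" "{\<alpha>\<in>Field k. g \<alpha> \<in> aboveS t i0} \<in> I"
    using maps_bounded_modD[OF bd] g by blast
  have "{\<alpha>\<in>Field k. h i \<alpha> \<noteq> h i0 \<alpha>} \<in> I" if i: "(i0, i) \<in> t" for i
  proof -
    have "{\<alpha>\<in>Field k. h i \<alpha> \<noteq> h i0 \<alpha>} \<subseteq> {\<alpha>\<in>Field k. g \<alpha> \<in> aboveS t i0}"
    proof safe
      fix \<alpha> assume \<alpha>: "\<alpha> \<in> Field k" "h i \<alpha> \<noteq> h i0 \<alpha>"
      show "g \<alpha> \<in> aboveS t i0"
      proof (rule ccontr)
        have wo: "wo_rel t" using t(1) Card_order_wo_rel by blast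
        assume "g \<alpha> \<notin> aboveS t i0"
        then have "(g \<alpha>, i0) \<in> t"
          using wo_rel.TOTALS[OF wo] wo_rel.REFL[OF wo] i0(1) g \<alpha>(1)
          by (auto simp: aboveS_def refl_on_def)
        moreover from this have "(g \<alpha>, i) \<in> t" using i wo_rel.TRANS[OF wo] by (auto dest: transD)
        ultimately have "h i0 \<alpha> = h (g \<alpha>) \<alpha>" "h i \<alpha> = h (g \<alpha>) \<alpha>" using g \<alpha>(1) by blast+
        then show False using \<alpha>(2) by simp
      qed
    qed
    then show ?thesis using ideal_on_subset[OF I i0(2)] by blast
  qed
  then show ?thesis using i0(1) by blast
qed

lemma maps_bounded_mod_if_increasing_families_stabilize:
  fixes e :: "'b \<Rightarrow> 'o :: order"
  assumes I: "ideal_on k I" and t: "Cinfinite t"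
    and e: "inj_on e (Field t)" "\<And>i j. (i, j) \<in> t \<Longrightarrow> e i \<le> e j"
    and stable: "\<And>h :: 'b \<Rightarrow> 'a \<Rightarrow> 'o.
      (\<And>\<alpha>. \<alpha> \<in> Field k \<Longrightarrow> |(\<lambda>i. h i \<alpha>) ` Field t| <o t) \<Longrightarrow>
      (\<And>i j \<alpha>. (i, j) \<in> t \<Longrightarrow> \<alpha> \<in> Field k \<Longrightarrow> h i \<alpha> \<le> h j \<alpha>) \<Longrightarrow>
      \<exists>i0\<in>Field t. \<forall>i\<in>Field t. (i0, i) \<in> t \<longrightarrow> {\<alpha>\<in>Field k. h i \<alpha> \<noteq> h i0 \<alpha>} \<in> I"
  shows "maps_bounded_mod k t I"
  unfolding maps_bounded_mod_def
proof (intro allI impI)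
  fix g assume g: "g ` Field k \<subseteq> Field t"
  define h where "h i \<alpha> = e (min_wrt t i (g \<alpha>))" for i \<alpha>
  have "|(\<lambda>i. h i \<alpha>) ` Field t| <o t" if "\<alpha> \<in> Field k" for \<alpha>
    unfolding h_def using card_of_image_min_wrt[OF t] g that by blast
  moreover have "h i \<alpha> \<le> h j \<alpha>" if "(i, j) \<in> t" "\<alpha> \<in> Field k" for i j \<alpha>
  proof -
    have "(min_wrt t i (g \<alpha>), min_wrt t j (g \<alpha>)) \<in> t"
      using min_wrt_mono[of t i j "g \<alpha>"] t g that by blast
    then show ?thesis unfolding h_def by (rule e(2))
  qed
  ultimately obtain i0 where i0: "i0 \<in> Field t"
    and stable_i0: "\<forall>i\<in>Field t. (i0, i) \<in> t \<longrightarrow> {\<alpha>\<in>Field k. h i \<alpha> \<noteq> h i0 \<alpha>} \<in> I"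
    using stable[of h] by blast
  obtain i1 where i1: "i1 \<in> Field t" "i0 \<noteq> i1" "(i0, i1) \<in> t" using Cinfinite_limit[OF i0 t] by blast
  have "{\<alpha>\<in>Field k. g \<alpha> \<in> aboveS t i0} \<subseteq> {\<alpha>\<in>Field k. h i1 \<alpha> \<noteq> h i0 \<alpha>}"
  proof safe
    fix \<alpha> assume \<alpha>: "\<alpha> \<in> Field k" "g \<alpha> \<in> aboveS t i0" and eq: "h i1 \<alpha> = h i0 \<alpha>"
    have "min_wrt t i0 (g \<alpha>) = i0" using \<alpha>(2) by (simp add: min_wrt_def aboveS_def)
    moreover have "min_wrt t i1 (g \<alpha>) \<in> Field t" "min_wrt t i1 (g \<alpha>) \<noteq> i0"
      using i1 \<alpha> g by (auto simp: min_wrt_def aboveS_def)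
    ultimately show False using eq e(1) i0 unfolding h_def by (auto dest: inj_onD)
  qed
  then show "\<exists>i\<in>Field t. {\<alpha>\<in>Field k. g \<alpha> \<in> aboveS t i} \<in> I"
    using stable_i0 i1 i0 ideal_on_subset[OF I] by blast
qed

theorem proposition2p4:
  fixes k :: "'a rel" and t :: "'b rel" and I :: "'a set set"
  assumes kappa: "Card_order k"
    and ideal: "ideal_on k I"
    and theta_card: "Card_order t" and theta_inf: "cinfinite t"
    and theta_regular: "regularCard t"
    and theta_less: "t <o k"
    and ordinals_big: "|Field k| <o |UNIV :: 'o::wellorder set|"
  shows "(weakly_saturated k t I \<and> indecomposable k t I) \<longleftrightarrow>
    (\<forall>(S :: 'a \<Rightarrow> 'o set) (h :: 'b \<Rightarrow> 'a \<Rightarrow> 'o).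
       (\<forall>\<alpha>\<in>Field k. |S \<alpha>| <o t) \<and>
       (\<forall>i\<in>Field t. \<forall>\<alpha>\<in>Field k. h i \<alpha> \<in> S \<alpha>) \<and>
       (\<forall>i\<in>Field t. \<forall>j\<in>Field t. (i, j) \<in> t \<and> i \<noteq> j \<longrightarrow>
          (\<forall>\<alpha>\<in>Field k. h i \<alpha> \<le> h j \<alpha>))
       \<longrightarrow>
       (\<exists>i0\<in>Field t. \<forall>i\<in>Field t. (i0, i) \<in> t \<longrightarrow>
          {\<alpha>\<in>Field k. h i \<alpha> \<noteq> h i0 \<alpha>} \<in> I))"
    (is "?saturated \<longleftrightarrow> ?eventually_constant")
proof -
  have t: "Cinfinite t" using theta_card theta_inf by simp
  show ?thesis
  proof
    assume ?saturated
    then have "maps_bounded_mod k t I"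
      using maps_bounded_mod_if_weakly_saturated_indecomposable[OF ideal t theta_regular] by blast
    then show ?eventually_constant
      using eventually_constant_if_maps_bounded_mod[OF ideal t theta_regular] by blast
  next
    assume ec: ?eventually_constant
    have "t \<le>o |UNIV :: 'o set|"
      using theta_less card_of_Field_ordIso[OF kappa] ordinals_big
      by (meson ordIso_symmetric ordLess_imp_ordLeq ordLess_ordIso_trans ordLess_transitive)
    then obtain e :: "'b \<Rightarrow> 'o" where e: "inj_on e (Field t)" "\<And>i j. (i, j) \<in> t \<Longrightarrow> e i \<le> e j"
      using monotone_embedding_into_wellorder by blast
    have "maps_bounded_mod k t I"
    proof (rule maps_bounded_mod_if_increasing_families_stabilize[OF ideal t e])
      fix h :: "'b \<Rightarrow> 'a \<Rightarrow> 'o"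
      assume "\<And>\<alpha>. \<alpha> \<in> Field k \<Longrightarrow> |(\<lambda>i. h i \<alpha>) ` Field t| <o t"
        and "\<And>i j \<alpha>. (i, j) \<in> t \<Longrightarrow> \<alpha> \<in> Field k \<Longrightarrow> h i \<alpha> \<le> h j \<alpha>"
      then show "\<exists>i0\<in>Field t. \<forall>i\<in>Field t. (i0, i) \<in> t \<longrightarrow> {\<alpha>\<in>Field k. h i \<alpha> \<noteq> h i0 \<alpha>} \<in> I"
        using ec[rule_format, of "\<lambda>\<alpha>. (\<lambda>i. h i \<alpha>) ` Field t" h] by blast
    qed
    then show ?saturated
      using weakly_saturated_if_maps_bounded_mod[OF ideal t]
        indecomposable_if_maps_bounded_mod[OF ideal t] by blast
  qed
qed

end
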